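(* Let $K$ be a field with $\operatorname{char}(K)\neq2$ and let $M$ be a Leibniz $K$-algebra. Let $M\star M$ be the Leibniz $K$-algebra generated by symbols $m_1\otimes m_2$ and $m_1\circledast m_2$ ($m_1,m_2\in M$), both $K$-bilinear in their arguments, subject to the relations, for all $m_1,m_2,m_3,m_4\in M$: $m_1\otimes[m_2,m_3]=[m_1,m_2]\otimes m_3-[m_1,m_3]\otimes m_2$; $m_1\circledast[m_2,m_3]=[m_1,m_2]\circledast m_3-[m_1,m_3]\circledast m_2$; $[m_1,m_2]\otimes m_3=[m_1,m_3]\circledast m_2-m_1\otimes[m_3,m_2]$; $[m_1,m_2]\circledast m_3=[m_1,m_3]\otimes m_2-m_1\circledast[m_3,m_2]$; $m_1\otimes[m_2,m_3]=-m_1\otimes[m_3,m_2]$; $m_1\circledast[m_2,m_3]=-m_1\circledast[m_3,m_2]$; and, for every choice of symbols $\diamond,\diamond'\in\{\otimes,\circledast\}$, $[m_1,m_2]\otimes[m_3,m_4]=[m_1\diamond m_2,m_3\diamond' m_4]=[m_1,m_2]\circledast[m_3,m_4]$. Consider the crossed module of Leibniz $K$-algebras $(M\star M,M,(\cdot_1,\cdot_2),\partial)$ with, on generators, $m\cdot_1(m_1\otimes m_2)=[m,m_1]\otimes m_2-[m,m_2]\circledast m_1$, $m\cdot_1(m_1\circledast m_2)=[m,m_1]\circledast m_2-[m,m_2]\otimes m_1$, $(m_1\otimes m_2)\cdot_2m=[m_1,m]\otimes m_2+m_1\otimes[m_2,m]$, $(m_1\circledast m_2)\cdot_2m=[m_1,m]\circledast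 m_2+m_1\circledast[m_2,m]$, and $\partial(m_1\otimes m_2)=[m_1,m_2]=\partial(m_1\circledast m_2)$. Then the pair of $K$-bilinear maps $\{-,-\},\langle-,-\rangle\colon M\times M\to M\star M$, $\{m_1,m_2\}=m_1\otimes m_2$, $\langle m_1,m_2\rangle=m_1\circledast m_2$, is a braiding on this crossed module.
   Context: A Leibniz $K$-algebra: bilinear bracket with $[x,[y,z]]=[[x,y],z]-[[x,z],y]$. A crossed module of Leibniz algebras $(L,N,(\cdot_1,\cdot_2),\partial)$ consists of bilinear maps $\cdot_1\colon N\times L\to L$, $\cdot_2\colon L\times N\to L$ forming a Leibniz action and a Leibniz homomorphism $\partial\colon L\to N$ with $\partial(n\cdot_1l)=[n,\partial l]$, $\partial(l\cdot_2n)=[\partial l,n]$, $\partial(l)\cdot_1l'=[l,l']=l\cdot_2\partial(l')$. A braiding on it is a pair of bilinear maps $\{-,-\},\langle-,-\rangle\colon N\times N\to L$ with, for all $l,l'\in L$, $n,n',n''\in N$: $\partial\{n,n'\}=[n,n']=\partial\langle n,n'\rangle$; $\{\partial l,\partial l'\}=[l,l']=\langle\partial l,\partial l'\rangle$; $\{\partial l,n\}=l\cdot_2n=\langle\partial l,n\rangle$; $\{n,\partial l\}=n\cdot_1l=\langle n,\partial l\rangle$; $\{n,[n',n'']\}=\{[n,n'],n''\}-\{[n,n''],n'\}$; $\langle n,[n',n'']\rangle=\{[n,n'],n''\}-\langle[n,n''],n'\rangle$; $\{n,[n',n'']\}=\{[n,n'],n''\}-\langle[n,n''],n'\rangle$;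 $\langle n,[n',n'']\rangle=\langle[n,n'],n''\rangle-\langle[n,n''],n'\rangle$. (The structure $(M\star M,M,(\cdot_1,\cdot_2),\partial)$ above is the non-abelian tensor product of $M$ with itself for the bracket actions, and is known to be a crossed module of Leibniz algebras.) *)

theory Defs
  imports Complex_Main
begin

text \<open>Leibniz K-algebras are modelled on a whole type: the additive group is the
type class structure, the scalar multiplication and the bracket are parameters.\<close>

definition leibniz_algebra :: "('k::field \<Rightarrow> 'a::ab_group_add \<Rightarrow> 'a) \<Rightarrow> ('a \<Rightarrow> 'a \<Rightarrow> 'a) \<Rightarrow> bool" where
  "leibniz_algebra sc br \<longleftrightarrow> vector_space sc
     \<and> (\<forall>x y z. br x (y + z) = br x y + br x z)
     \<and> (\<forall>x y z. br (x + y) z = br x z + br y z)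
     \<and> (\<forall>c x y. br (sc c x) y = sc c (br x y))
     \<and> (\<forall>c x y. br x (sc c y) = sc c (br x y))
     \<and> (\<forall>x y z. br x (br y z) = br (br x y) z - br (br x z) y)"

definition bilin :: "('k::field \<Rightarrow> 'a::ab_group_add \<Rightarrow> 'a) \<Rightarrow> ('k \<Rightarrow> 'b::ab_group_add \<Rightarrow> 'b)
    \<Rightarrow> ('k \<Rightarrow> 'c::ab_group_add \<Rightarrow> 'c) \<Rightarrow> ('a \<Rightarrow> 'b \<Rightarrow> 'c) \<Rightarrow> bool" where
  "bilin s1 s2 s3 f \<longleftrightarrow> (\<forall>x. Vector_Spaces.linear s2 s3 (f x))
                      \<and> (\<forall>y. Vector_Spaces.linear s1 s3 (\<lambda>x. f x y))"

definition leibniz_hom :: "('k::field \<Rightarrow> 'a::ab_group_add \<Rightarrow> 'a) \<Rightarrow> ('a \<Rightarrow> 'a \<Rightarrow> 'a)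
    \<Rightarrow> ('k \<Rightarrow> 'b::ab_group_add \<Rightarrow> 'b) \<Rightarrow> ('b \<Rightarrow> 'b \<Rightarrow> 'b) \<Rightarrow> ('a \<Rightarrow> 'b) \<Rightarrow> bool" where
  "leibniz_hom s1 b1 s2 b2 h \<longleftrightarrow> Vector_Spaces.linear s1 s2 h \<and> (\<forall>x y. h (b1 x y) = b2 (h x) (h y))"

inductive_set leibniz_span :: "('k::field \<Rightarrow> 'a::ab_group_add \<Rightarrow> 'a) \<Rightarrow> ('a \<Rightarrow> 'a \<Rightarrow> 'a) \<Rightarrow> 'a set \<Rightarrow> 'a set"
  for sc br S where
    gen: "x \<in> S \<Longrightarrow> x \<in> leibniz_span sc br S"
  | zero: "0 \<in> leibniz_span sc br S"
  | add: "x \<in> leibniz_span sc br S \<Longrightarrow> y \<in> leibniz_span sc br S \<Longrightarrow> x + y \<in> leibniz_span sc br S"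
  | scale: "x \<in> leibniz_span sc br S \<Longrightarrow> sc c x \<in> leibniz_span sc br S"
  | brk: "x \<in> leibniz_span sc br S \<Longrightarrow> y \<in> leibniz_span sc br S \<Longrightarrow> br x y \<in> leibniz_span sc br S"

text \<open>The defining relations of the non-abelian tensor square M \<star> M, for bilinear
maps tens (m1 \<otimes> m2) and circ (m1 \<circledast> m2) into a Leibniz algebra with bracket brT.\<close>
definition star_relations :: "('m \<Rightarrow> 'm \<Rightarrow> 'm) \<Rightarrow> ('t::ab_group_add \<Rightarrow> 't \<Rightarrow> 't)
    \<Rightarrow> ('m \<Rightarrow> 'm \<Rightarrow> 't) \<Rightarrow> ('m \<Rightarrow> 'm \<Rightarrow> 't) \<Rightarrow> bool" where
  "star_relations brM brT tens circ \<longleftrightarrow>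
     (\<forall>m1 m2 m3 m4.
        tens m1 (brM m2 m3) = tens (brM m1 m2) m3 - tens (brM m1 m3) m2
      \<and> circ m1 (brM m2 m3) = circ (brM m1 m2) m3 - circ (brM m1 m3) m2
      \<and> tens (brM m1 m2) m3 = circ (brM m1 m3) m2 - tens m1 (brM m3 m2)
      \<and> circ (brM m1 m2) m3 = tens (brM m1 m3) m2 - circ m1 (brM m3 m2)
      \<and> tens m1 (brM m2 m3) = - tens m1 (brM m3 m2)
      \<and> circ m1 (brM m2 m3) = - circ m1 (brM m3 m2)
      \<and> (\<forall>d1 \<in> {tens, circ}. \<forall>d2 \<in> {tens, circ}.
            tens (brM m1 m2) (brM m3 m4) = brT (d1 m1 m2) (d2 m3 m4)
          \<and> brT (d1 m1 m2) (d2 m3 m4) = circ (brM m1 m2) (brM m3 m4)))"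

text \<open>(T, scT, brT, tens, circ) is the Leibniz algebra presented by the generators
and relations above: it satisfies them, is generated by the symbols, and is universal
(here: with respect to all Leibniz algebras living on the type 'c).\<close>
definition is_star_square :: "'c::ab_group_add itself \<Rightarrow> ('k::field \<Rightarrow> 'm::ab_group_add \<Rightarrow> 'm) \<Rightarrow> ('m \<Rightarrow> 'm \<Rightarrow> 'm)
    \<Rightarrow> ('k \<Rightarrow> 't::ab_group_add \<Rightarrow> 't) \<Rightarrow> ('t \<Rightarrow> 't \<Rightarrow> 't)
    \<Rightarrow> ('m \<Rightarrow> 'm \<Rightarrow> 't) \<Rightarrow> ('m \<Rightarrow> 'm \<Rightarrow> 't) \<Rightarrow> bool" where
  "is_star_square (_::'c itself) scM brM scT brT tens circ \<longleftrightarrow>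
     leibniz_algebra scT brT
   \<and> bilin scM scM scT tens \<and> bilin scM scM scT circ
   \<and> star_relations brM brT tens circ
   \<and> leibniz_span scT brT (range (case_prod tens) \<union> range (case_prod circ)) = UNIV
   \<and> (\<forall>(scC :: 'k \<Rightarrow> 'c \<Rightarrow> 'c) brC f g.
        leibniz_algebra scC brC \<and> bilin scM scM scC f \<and> bilin scM scM scC g
        \<and> star_relations brM brC f g \<longrightarrow>
        (\<exists>!h. leibniz_hom scT brT scC brC h
              \<and> (\<forall>a b. h (tens a b) = f a b) \<and> (\<forall>a b. h (circ a b) = g a b)))"

definition leibniz_action :: "('k::field \<Rightarrow> 'l::ab_group_add \<Rightarrow> 'l) \<Rightarrow> ('l \<Rightarrow> 'l \<Rightarrow> 'l)
    \<Rightarrow> ('k \<Rightarrow> 'n::ab_group_add \<Rightarrow> 'n) \<Rightarrow> ('n \<Rightarrow> 'n \<Rightarrow> 'n)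
    \<Rightarrow> ('n \<Rightarrow> 'l \<Rightarrow> 'l) \<Rightarrow> ('l \<Rightarrow> 'n \<Rightarrow> 'l) \<Rightarrow> bool" where
  "leibniz_action scL brL scN brN act1 act2 \<longleftrightarrow>
     bilin scN scL scL act1 \<and> bilin scL scN scL act2
   \<and> (\<forall>l n n'. act2 l (brN n n') = act2 (act2 l n) n' - act2 (act2 l n') n)
   \<and> (\<forall>l n n'. act1 n (act2 l n') = act2 (act1 n l) n' - act1 (brN n n') l)
   \<and> (\<forall>l n n'. act1 n (act1 n' l) = act1 (brN n n') l - act2 (act1 n l) n')
   \<and> (\<forall>l l' n. brL l (act2 l' n) = act2 (brL l l') n - brL (act2 l n) l')
   \<and> (\<forall>l l' n. brL l (act1 n l') = brL (act2 l n) l' - act2 (brL l l') n)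
   \<and> (\<forall>l l' n. act1 n (brL l l') = brL (act1 n l) l' - brL (act1 n l') l)"

definition leibniz_crossed_module :: "('k::field \<Rightarrow> 'l::ab_group_add \<Rightarrow> 'l) \<Rightarrow> ('l \<Rightarrow> 'l \<Rightarrow> 'l)
    \<Rightarrow> ('k \<Rightarrow> 'n::ab_group_add \<Rightarrow> 'n) \<Rightarrow> ('n \<Rightarrow> 'n \<Rightarrow> 'n)
    \<Rightarrow> ('n \<Rightarrow> 'l \<Rightarrow> 'l) \<Rightarrow> ('l \<Rightarrow> 'n \<Rightarrow> 'l) \<Rightarrow> ('l \<Rightarrow> 'n) \<Rightarrow> bool" where
  "leibniz_crossed_module scL brL scN brN act1 act2 d \<longleftrightarrow>
     leibniz_algebra scL brL \<and> leibniz_algebra scN brN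
   \<and> leibniz_action scL brL scN brN act1 act2
   \<and> leibniz_hom scL brL scN brN d
   \<and> (\<forall>n l. d (act1 n l) = brN n (d l))
   \<and> (\<forall>n l. d (act2 l n) = brN (d l) n)
   \<and> (\<forall>l l'. act1 (d l) l' = brL l l' \<and> brL l l' = act2 l (d l'))"

definition leibniz_braiding :: "('k::field \<Rightarrow> 'l::ab_group_add \<Rightarrow> 'l) \<Rightarrow> ('l \<Rightarrow> 'l \<Rightarrow> 'l)
    \<Rightarrow> ('k \<Rightarrow> 'n::ab_group_add \<Rightarrow> 'n) \<Rightarrow> ('n \<Rightarrow> 'n \<Rightarrow> 'n)
    \<Rightarrow> ('n \<Rightarrow> 'l \<Rightarrow> 'l) \<Rightarrow> ('l \<Rightarrow> 'n \<Rightarrow> 'l) \<Rightarrow> ('l \<Rightarrow> 'n)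
    \<Rightarrow> ('n \<Rightarrow> 'n \<Rightarrow> 'l) \<Rightarrow> ('n \<Rightarrow> 'n \<Rightarrow> 'l) \<Rightarrow> bool" where
  "leibniz_braiding scL brL scN brN act1 act2 d B A \<longleftrightarrow>
     bilin scN scN scL B \<and> bilin scN scN scL A
   \<and> (\<forall>n n'. d (B n n') = brN n n' \<and> brN n n' = d (A n n'))
   \<and> (\<forall>l l'. B (d l) (d l') = brL l l' \<and> brL l l' = A (d l) (d l'))
   \<and> (\<forall>l n. B (d l) n = act2 l n \<and> act2 l n = A (d l) n)
   \<and> (\<forall>l n. B n (d l) = act1 n l \<and> act1 n l = A n (d l))
   \<and> (\<forall>n n' n''.
        B n (brN n' n'') = B (brN n n') n'' - B (brN n n'') n'
      \<and> A n (brN n' n'') = B (brN n n') n'' - A (brN n n'') n'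
      \<and> B n (brN n' n'') = B (brN n n') n'' - A (brN n n'') n'
      \<and> A n (brN n' n'') = A (brN n n') n'' - A (brN n n'') n')"

end

(* In characteristic not 2 the defining relations force m1 \<otimes> m2 = m1 \<circledast> m2 as soon as one
   argument is a bracket. The compatibilities {n, d l} = n \<cdot>1 l and {d l, n} = l \<cdot>2 n are proved
   by induction on l along the generation of M \<star> M by the symbols: on generators they are
   the defining relations, and brackets are handled by the crossed module axioms. As d takes
   values in the linear span of brackets, the same identities hold for \<langle>-,-\<rangle>, and the four
   bracket axioms of a braiding reduce to the first two defining relations. *)

theory Submission
  imports Defs
begin

lemma (in vector_space) double_eq_zero_imp_eq_zero:
  fixes x :: 'b
  assumes "(2::'a) \<noteq> 0" and "x + x = 0"
  shows "x = 0"
proof -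
  have "scale 2 x = x + x"
    using scale_left_distrib[of 1 1 x] by simp
  with assms show ?thesis by simp
qed

lemma leibniz_span_induct_linear_eq:
  assumes x: "x \<in> leibniz_span sc br S"
    and f_linear: "\<And>i. Vector_Spaces.linear sc sc' (f i)"
    and g_linear: "\<And>i. Vector_Spaces.linear sc sc' (g i)"
    and base: "\<And>i s. s \<in> S \<Longrightarrow> f i s = g i s"
    and bracket: "\<And>x y i. (\<And>j. f j x = g j x) \<Longrightarrow> (\<And>j. f j y = g j y) \<Longrightarrow>
      f i (br x y) = g i (br x y)"
  shows "f i x = g i x"
  using x
proof (induction arbitrary: i)
  case (gen x)
  then show ?case by (rule base)
next
  case zero
  have "f i 0 = 0" "g i 0 = 0"
    using f_linear g_linear module_hom.zero linear_iff_module_hom by metis+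
  then show ?case by simp
next
  case (add x y)
  then show ?case
    using f_linear[of i] g_linear[of i] by (simp add: Vector_Spaces.linear_iff)
next
  case (scale x c)
  then show ?case
    using f_linear[of i] g_linear[of i] by (simp add: Vector_Spaces.linear_iff)
next
  case (brk x y)
  show ?case by (rule bracket; rule brk.IH)
qed

lemma leibniz_hom_image_leibniz_span:
  assumes hom: "leibniz_hom sc br sc' br' h"
    and x: "x \<in> leibniz_span sc br S"
    and base: "h ` S \<subseteq> range (case_prod br')"
  shows "h x \<in> module.span sc' (range (case_prod br'))"
proof -
  have lin: "Vector_Spaces.linear sc sc' h" and h_bracket: "\<And>x y. h (br x y) = br' (h x) (h y)"
    using hom unfolding leibniz_hom_def by blast+
  then have "module sc'" and h_add: "\<And>x y. h (x + y) = h x + h y"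
    and h_scale: "\<And>c x. h (sc c x) = sc' c (h x)"
    unfolding Vector_Spaces.linear_iff module_iff_vector_space by blast+
  from x show ?thesis
  proof induction
    case (gen x)
    then show ?case using base \<open>module sc'\<close> by (blast intro: module.span_base)
  next
    case zero
    have "h 0 = 0"
      using lin module_hom.zero linear_iff_module_hom by metis
    then show ?case
      using \<open>module sc'\<close> by (simp add: module.span_zero)
  next
    case (add x y)
    then show ?case
      using \<open>module sc'\<close> by (simp add: h_add module.span_add)
  next
    case (scale x c)
    then show ?case
      using \<open>module sc'\<close> by (simp add: h_scale module.span_scale)
  next
    case (brk x y)
    have "br' (h x) (h y) \<in> range (case_prod br')"
      by auto
    then show ?case
      using \<open>module sc'\<close> by (simp add: h_bracket module.span_base)
  qed
qed

lemma
  assumes "star_relations brM brT tens circ"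
  shows star_tens_bracket_right: "tens a (brM b c) = tens (brM a b) c - tens (brM a c) b"
    and star_circ_bracket_right: "circ a (brM b c) = circ (brM a b) c - circ (brM a c) b"
    and star_tens_bracket_left: "tens (brM a b) c = circ (brM a c) b - tens a (brM c b)"
    and star_circ_bracket_left: "circ (brM a b) c = tens (brM a c) b - circ a (brM c b)"
    and star_tens_bracket_antisym: "tens a (brM b c) = - tens a (brM c b)"
  using assms unfolding star_relations_def by blast+

lemma star_tens_eq_circ_bracket_right:
  assumes rel: "star_relations brM brT tens circ"
  shows "tens a (brM b c) = circ a (brM b c)"
proof -
  have "tens a (brM c b) = circ (brM a c) b - tens (brM a b) c"
    using star_tens_bracket_left[OF rel, of a b c] by simp
  also have "\<dots> = - circ a (brM b c)"
    using star_circ_bracket_left[OF rel, of a c b] by simp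
  finally show ?thesis
    using star_tens_bracket_antisym[OF rel, of a b c] by simp
qed

text \<open>The difference \<open>D b c\<close> is antisymmetric by the relations moving a bracket out of the
  left argument, and symmetric by those moving it out of the right one; so \<open>2 D = 0\<close>.\<close>

lemma star_tens_eq_circ_bracket_left:
  fixes sc :: "'k::field \<Rightarrow> 't::ab_group_add \<Rightarrow> 't" and tens circ :: "'m \<Rightarrow> 'm \<Rightarrow> 't"
  assumes vs: "vector_space sc" and char: "(2::'k) \<noteq> 0"
    and rel: "star_relations brM brT tens circ"
  shows "tens (brM a b) c = circ (brM a b) c"
proof -
  define D where "D b c = tens (brM a b) c - circ (brM a b) c" for b c
  have "D b c = (circ (brM a c) b - tens a (brM c b)) - (tens (brM a c) b - circ a (brM c b))"
    unfolding D_def using star_tens_bracket_left[OF rel] star_circ_bracket_left[OF rel] by simp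
  also have "\<dots> = - D c b"
    unfolding D_def using star_tens_eq_circ_bracket_right[OF rel, of a c b] by simp
  finally have antisym: "D b c = - D c b" .
  have "D b c - D c b = tens a (brM b c) - circ a (brM b c)"
    unfolding D_def using star_tens_bracket_right[OF rel] star_circ_bracket_right[OF rel] by simp
  also have "\<dots> = 0"
    using star_tens_eq_circ_bracket_right[OF rel] by simp
  finally have sym: "D b c - D c b = 0" .
  have "D b c + D b c = D b c - D c b"
    using antisym by simp
  also have "\<dots> = 0"
    by (rule sym)
  finally have "D b c + D b c = 0" .
  then have "D b c = 0"
    by (rule vector_space.double_eq_zero_imp_eq_zero[OF vs char])
  then show ?thesis unfolding D_def by simp
qed

locale star_square_crossed_module =
  fixes scM :: "'k::field \<Rightarrow> 'm::ab_group_add \<Rightarrow> 'm" and brM :: "'m \<Rightarrow> 'm \<Rightarrow> 'm"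
    and scT :: "'k \<Rightarrow> 't::ab_group_add \<Rightarrow> 't" and brT :: "'t \<Rightarrow> 't \<Rightarrow> 't"
    and tens circ :: "'m \<Rightarrow> 'm \<Rightarrow> 't"
    and act1 :: "'m \<Rightarrow> 't \<Rightarrow> 't" and act2 :: "'t \<Rightarrow> 'm \<Rightarrow> 't" and d :: "'t \<Rightarrow> 'm"
  assumes char: "(2::'k) \<noteq> 0"
    and tens_bilin: "bilin scM scM scT tens"
    and circ_bilin: "bilin scM scM scT circ"
    and relations: "star_relations brM brT tens circ"
    and generated: "leibniz_span scT brT (range (case_prod tens) \<union> range (case_prod circ)) = UNIV"
    and xmod: "leibniz_crossed_module scT brT scM brM act1 act2 d"
    and act1_tens: "act1 m (tens m1 m2) = tens (brM m m1) m2 - circ (brM m m2) m1"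
    and act1_circ: "act1 m (circ m1 m2) = circ (brM m m1) m2 - tens (brM m m2) m1"
    and act2_tens: "act2 (tens m1 m2) m = tens (brM m1 m) m2 + tens m1 (brM m2 m)"
    and act2_circ: "act2 (circ m1 m2) m = circ (brM m1 m) m2 + circ m1 (brM m2 m)"
    and d_tens: "d (tens m1 m2) = brM m1 m2"
    and d_circ: "d (circ m1 m2) = brM m1 m2"
begin

lemma
  shows d_hom: "leibniz_hom scT brT scM brM d"
    and action: "leibniz_action scT brT scM brM act1 act2"
    and d_act1: "d (act1 n l) = brM n (d l)"
    and d_act2: "d (act2 l n) = brM (d l) n"
    and act1_d: "act1 (d l) l' = brT l l'"
    and act2_d: "act2 l (d l') = brT l l'"
  using xmod unfolding leibniz_crossed_module_def by auto

lemma
  shows d_linear: "Vector_Spaces.linear scT scM d"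
    and d_bracket: "d (brT x y) = brM (d x) (d y)"
  using d_hom unfolding leibniz_hom_def by blast+

lemma
  shows act1_linear: "Vector_Spaces.linear scT scT (act1 n)"
    and act2_linear: "Vector_Spaces.linear scT scT (\<lambda>l. act2 l n)"
    and act1_bracket: "act1 n (brT l l') = brT (act1 n l) l' - brT (act1 n l') l"
    and bracket_act2: "brT l (act2 l' n) = act2 (brT l l') n - brT (act2 l n) l'"
  using action unfolding leibniz_action_def bilin_def by auto

lemma
  shows tens_linear_left: "Vector_Spaces.linear scM scT (\<lambda>a. tens a b)"
    and tens_linear_right: "Vector_Spaces.linear scM scT (tens a)"
    and circ_linear_left: "Vector_Spaces.linear scM scT (\<lambda>a. circ a b)"
    and circ_linear_right: "Vector_Spaces.linear scM scT (circ a)"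
  using tens_bilin circ_bilin unfolding bilin_def by blast+

lemma vector_space_pair: "vector_space_pair scM scT"
  using tens_linear_right
  unfolding vector_space_pair_def Vector_Spaces.linear_iff by blast

lemma tens_eq_circ_bracket_left: "tens (brM a b) c = circ (brM a b) c"
proof (rule star_tens_eq_circ_bracket_left[OF _ char relations])
  show "vector_space scT"
    using act1_linear unfolding Vector_Spaces.linear_iff by blast
qed

lemma generated_induct_linear_eq:
  assumes "\<And>i. Vector_Spaces.linear scT sc (f i)" and "\<And>i. Vector_Spaces.linear scT sc (g i)"
    and "\<And>i a b. f i (tens a b) = g i (tens a b)" and "\<And>i a b. f i (circ a b) = g i (circ a b)"
    and "\<And>x y i. (\<And>j. f j x = g j x) \<Longrightarrow> (\<And>j. f j y = g j y) \<Longrightarrow>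
      f i (brT x y) = g i (brT x y)"
  shows "f i l = g i l"
  by (rule leibniz_span_induct_linear_eq[where S="range (case_prod tens) \<union> range (case_prod circ)"])
    (use assms generated in auto)

lemma d_in_span_brackets: "d l \<in> module.span scM (range (case_prod brM))"
proof (rule leibniz_hom_image_leibniz_span[OF d_hom])
  have "brM a b \<in> range (case_prod brM)" for a b
    by (metis case_prod_conv rangeI)
  then show "d ` (range (case_prod tens) \<union> range (case_prod circ)) \<subseteq> range (case_prod brM)"
    by (auto simp: d_tens d_circ)
qed (simp add: generated)

lemma tens_d_right: "tens n (d l) = act1 n l"
proof (rule generated_induct_linear_eq[where f="\<lambda>n l. tens n (d l)" and g=act1])
  fix n
  show "Vector_Spaces.linear scT scT (\<lambda>l. tens n (d l))"
    using Vector_Spaces.linear_compose[OF d_linear tens_linear_right] by (simp add: o_def)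
  show "Vector_Spaces.linear scT scT (act1 n)"
    by (rule act1_linear)
next
  fix n a b
  show "tens n (d (tens a b)) = act1 n (tens a b)"
    using star_tens_bracket_left[OF relations, of n a b]
      star_tens_bracket_antisym[OF relations, of n b a]
    by (simp add: d_tens act1_tens)
  show "tens n (d (circ a b)) = act1 n (circ a b)"
    using star_tens_bracket_left[OF relations, of n b a] by (simp add: d_circ act1_circ)
next
  fix x y n
  assume IH: "\<And>j. tens j (d x) = act1 j x" "\<And>j. tens j (d y) = act1 j y"
  have "tens n (d (brT x y)) = tens (brM n (d x)) (d y) - tens (brM n (d y)) (d x)"
    using star_tens_bracket_right[OF relations] by (simp add: d_bracket)
  also have "\<dots> = act1 (d (act1 n x)) y - act1 (d (act1 n y)) x"
    by (simp add: IH d_act1)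
  also have "\<dots> = act1 n (brT x y)"
    by (simp add: act1_d act1_bracket)
  finally show "tens n (d (brT x y)) = act1 n (brT x y)" .
qed

lemma circ_d_right: "circ n (d l) = act1 n l"
proof -
  have "circ n (d l) = tens n (d l)"
    by (rule vector_space_pair.linear_eq_on[OF vector_space_pair circ_linear_right tens_linear_right
          d_in_span_brackets])
      (auto simp: star_tens_eq_circ_bracket_right[OF relations])
  then show ?thesis
    by (simp add: tens_d_right)
qed

lemma tens_d_left: "tens (d l) n = act2 l n"
proof (rule generated_induct_linear_eq[where f="\<lambda>n l. tens (d l) n" and g="\<lambda>n l. act2 l n"])
  fix n
  show "Vector_Spaces.linear scT scT (\<lambda>l. tens (d l) n)"
    using Vector_Spaces.linear_compose[OF d_linear tens_linear_left] by (simp add: o_def)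
  show "Vector_Spaces.linear scT scT (\<lambda>l. act2 l n)"
    by (rule act2_linear)
next
  fix n a b
  show "tens (d (tens a b)) n = act2 (tens a b) n"
    using star_tens_bracket_right[OF relations, of a b n] by (simp add: d_tens act2_tens)
  show "tens (d (circ a b)) n = act2 (circ a b) n"
    using star_circ_bracket_right[OF relations, of a b n] tens_eq_circ_bracket_left[of a b n]
    by (simp add: d_circ act2_circ)
next
  fix x y n
  assume IH: "\<And>j. tens (d x) j = act2 x j" "\<And>j. tens (d y) j = act2 y j"
  have "tens (d (brT x y)) n = tens (d x) (brM (d y) n) + tens (brM (d x) n) (d y)"
    using star_tens_bracket_right[OF relations, of "d x" "d y" n] by (simp add: d_bracket)
  also have "\<dots> = act2 x (d (act2 y n)) + act1 (d (act2 x n)) y"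
    by (simp add: IH tens_d_right d_act2)
  also have "\<dots> = act2 (brT x y) n"
    using bracket_act2[of x y n] by (simp add: act1_d act2_d)
  finally show "tens (d (brT x y)) n = act2 (brT x y) n" .
qed

lemma circ_d_left: "circ (d l) n = act2 l n"
proof -
  have "circ (d l) n = tens (d l) n"
    by (rule vector_space_pair.linear_eq_on[OF vector_space_pair circ_linear_left tens_linear_left
          d_in_span_brackets])
      (auto simp: tens_eq_circ_bracket_left)
  then show ?thesis
    by (simp add: tens_d_left)
qed

lemma braiding: "leibniz_braiding scT brT scM brM act1 act2 d tens circ"
  unfolding leibniz_braiding_def
proof (intro conjI allI)
  fix n n' n''
  show "tens n (brM n' n'') = tens (brM n n') n'' - tens (brM n n'') n'"
    by (rule star_tens_bracket_right[OF relations])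
  show "circ n (brM n' n'') = circ (brM n n') n'' - circ (brM n n'') n'"
    by (rule star_circ_bracket_right[OF relations])
  show "circ n (brM n' n'') = tens (brM n n') n'' - circ (brM n n'') n'"
    using star_tens_bracket_right[OF relations, of n n' n''] tens_eq_circ_bracket_left[of n n'' n']
    by (simp add: star_tens_eq_circ_bracket_right[OF relations])
  show "tens n (brM n' n'') = tens (brM n n') n'' - circ (brM n n'') n'"
    using star_tens_bracket_right[OF relations, of n n' n''] tens_eq_circ_bracket_left[of n n'' n']
    by simp
qed (simp_all add: tens_bilin circ_bilin d_tens d_circ act1_d tens_d_right circ_d_right tens_d_left
    circ_d_left)

end

theorem mainTheorem8:
  fixes scM :: "'k::field \<Rightarrow> 'm::ab_group_add \<Rightarrow> 'm" and brM :: "'m \<Rightarrow> 'm \<Rightarrow> 'm"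
    and scT :: "'k \<Rightarrow> 't::ab_group_add \<Rightarrow> 't" and brT :: "'t \<Rightarrow> 't \<Rightarrow> 't"
    and tens circ :: "'m \<Rightarrow> 'm \<Rightarrow> 't"
    and act1 :: "'m \<Rightarrow> 't \<Rightarrow> 't" and act2 :: "'t \<Rightarrow> 'm \<Rightarrow> 't" and d :: "'t \<Rightarrow> 'm"
  assumes char: "(2::'k) \<noteq> 0"
    and M: "leibniz_algebra scM brM"
    and star: "is_star_square TYPE('c::ab_group_add) scM brM scT brT tens circ"
    and xmod: "leibniz_crossed_module scT brT scM brM act1 act2 d"
    and act1_tens: "\<And>m m1 m2. act1 m (tens m1 m2) = tens (brM m m1) m2 - circ (brM m m2) m1"
    and act1_circ: "\<And>m m1 m2. act1 m (circ m1 m2) = circ (brM m m1) m2 - tens (brM m m2) m1"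
    and act2_tens: "\<And>m m1 m2. act2 (tens m1 m2) m = tens (brM m1 m) m2 + tens m1 (brM m2 m)"
    and act2_circ: "\<And>m m1 m2. act2 (circ m1 m2) m = circ (brM m1 m) m2 + circ m1 (brM m2 m)"
    and d_tens: "\<And>m1 m2. d (tens m1 m2) = brM m1 m2"
    and d_circ: "\<And>m1 m2. d (circ m1 m2) = brM m1 m2"
  shows "leibniz_braiding scT brT scM brM act1 act2 d tens circ"
proof -
  interpret star_square_crossed_module scM brM scT brT tens circ act1 act2 d
    using char star xmod act1_tens act1_circ act2_tens act2_circ d_tens d_circ
    by unfold_locales (simp_all add: is_star_square_def)
  show ?thesis
    by (rule braiding)
qed

end
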